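(* Let $(\mathcal{X},\rho)$ be a length space and $\eta:\mathcal{X}\to\mathcal{Y}$ a function. Then for all $r>0$, $V_r^c=(\partial_\eta\mathcal{X})^r$, where $V_r=\{x\in\mathcal{X}:\mathrm{margin}_\eta(x)\ge r\}$.
   Context: A length space: $\rho(x,x')=\inf_\gamma\ell(\gamma)$ over continuous paths from $x$ to $x'$. $\mathrm{margin}_\eta(x)=\inf\{\rho(x,x'):\eta(x')\ne\eta(x)\}$, $\partial_\eta\mathcal{X}=\{x:\mathrm{margin}_\eta(x)=0\}$, and for $A\subset\mathcal{X}$, $A^r=\bigcup_{x\in A}B(x,r)$ with $B(x,r)$ the open ball. *)

theory Defs
  imports "HOL-Analysis.Analysis"
begin

text \<open>Valued in ereal, since paths may have infinite length.\<close>
definition curve_length :: "(real \<Rightarrow> 'a::metric_space) \<Rightarrow> ereal" where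
  "curve_length g = (SUP p \<in> {(n::nat, t::nat \<Rightarrow> real). t 0 = 0 \<and> t n = 1 \<and> (\<forall>i<n. t i \<le> t (Suc i))}.
       ereal (\<Sum>i<fst p. dist (g (snd p i)) (g (snd p (Suc i)))))"

definition length_space :: "'a::metric_space itself \<Rightarrow> bool" where
  "length_space _ \<longleftrightarrow> (\<forall>x y::'a. ereal (dist x y) =
      Inf {curve_length g | g. path g \<and> pathstart g = x \<and> pathfinish g = y})"

text \<open>Margin: distance to the nearest point with a different label (inf of empty set = \<infinity>).\<close>
definition margin :: "('a::metric_space \<Rightarrow> 'b) \<Rightarrow> 'a \<Rightarrow> ereal" where
  "margin eta x = Inf {ereal (dist x x') | x'. eta x' \<noteq> eta x}"

definition decision_boundary :: "('a::metric_space \<Rightarrow> 'b) \<Rightarrow> 'a set" where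
  "decision_boundary eta = {x. margin eta x = 0}"

definition set_expand :: "'a::metric_space set \<Rightarrow> real \<Rightarrow> 'a set" where
  "set_expand A r = (\<Union>x\<in>A. ball x r)"

definition V_set :: "('a::metric_space \<Rightarrow> 'b) \<Rightarrow> real \<Rightarrow> 'a set" where
  "V_set eta r = {x. margin eta x \<ge> ereal r}"

end

theory Submission
  imports Defs
begin

text \<open>If x has margin below r, some x' with a different label lies within distance r, and
  in a length space they are joined by a path of length below r. The label cannot be locally
  constant along this path, since [0,1] is connected, so the path meets the decision boundary,
  at a point within distance r of x. Conversely, points labelled differently from a boundary
  point z lie arbitrarily close to z, so if z is within r of x, the triangle inequality gives
  a point labelled differently from x within r of x.\<close>

lemma margin_less_iff:
  "margin eta x < ereal r \<longleftrightarrow> (\<exists>x'. eta x' \<noteq> eta x \<and> dist x x' < r)"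
  unfolding margin_def Inf_less_iff by auto

lemma margin_nonneg: "margin eta x \<ge> 0"
  unfolding margin_def by (rule Inf_greatest) auto

lemma margin_eq_0_iff: "margin eta x = 0 \<longleftrightarrow> x \<in> closure {x'. eta x' \<noteq> eta x}"
proof -
  have "margin eta x = 0 \<longleftrightarrow> (\<forall>e>0. margin eta x < ereal e)"
  proof
    assume small: "\<forall>e>0. margin eta x < ereal e"
    have "margin eta x \<le> 0"
    proof (rule ereal_le_epsilon2)
      fix e :: real
      assume "0 < e"
      with small show "margin eta x \<le> 0 + ereal e" by (simp add: less_imp_le)
    qed
    with margin_nonneg show "margin eta x = 0" by (rule antisym[rotated])
  qed (simp add: zero_ereal_def)
  then show ?thesis
    by (simp add: margin_less_iff closure_approachable dist_commute)
qed

lemma dist_le_curve_length: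
  assumes "t \<in> {0..1}"
  shows "ereal (dist (g 0) (g t)) \<le> curve_length g"
proof -
  define p where "p = (2::nat, \<lambda>i::nat. if i = 0 then 0 else if i = 1 then t else (1::real))"
  have "p \<in> {(n, t). t 0 = 0 \<and> t n = 1 \<and> (\<forall>i<n. t i \<le> t (Suc i))}"
    using assms by (auto simp: p_def less_2_cases_iff)
  have "dist (g 0) (g t) \<le> dist (g 0) (g t) + dist (g t) (g 1)"
    by simp
  also have "\<dots> = (\<Sum>i<fst p. dist (g (snd p i)) (g (snd p (Suc i))))"
    by (simp add: p_def numeral_2_eq_2)
  finally have "ereal (dist (g 0) (g t))
      \<le> ereal (\<Sum>i<fst p. dist (g (snd p i)) (g (snd p (Suc i))))"
    by simp
  also have "\<dots> \<le> curve_length g"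
    unfolding curve_length_def using \<open>p \<in> _\<close> by (rule SUP_upper)
  finally show ?thesis .
qed

lemma length_space_obtain_short_path:
  fixes x y :: "'a::metric_space"
  assumes "length_space TYPE('a)" and "dist x y < r"
  obtains g
  where "path g" "pathstart g = x" "pathfinish g = y" "curve_length g < ereal r"
proof -
  have "Inf {curve_length g | g. path g \<and> pathstart g = x \<and> pathfinish g = y} < ereal r"
    using assms unfolding length_space_def by (metis ereal_less_eq(3) not_le)
  then show thesis using that by (auto simp: Inf_less_iff)
qed

lemma path_meets_decision_boundary:
  assumes "path g" and "eta (pathfinish g) \<noteq> eta (pathstart g)"
  shows "\<exists>t\<in>{0..1}. g t \<in> decision_boundary eta"
proof (rule ccontr)
  assume "\<not> ?thesis"
  then have off_boundary: "g a \<notin> closure {x'. eta x' \<noteq> eta (g a)}" if "a \<in> {0..1}" for a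
    using that by (auto simp: decision_boundary_def margin_eq_0_iff)
  have "eta (g 1) = eta (g 0)"
  proof (rule connected_induction_simple[of "{0..1}" 0 1 "\<lambda>t. eta (g t) = eta (g 0)"])
    fix a :: real
    assume a: "a \<in> {0..1}"
    define U where "U = - closure {x'. eta x' \<noteq> eta (g a)}"
    have "open U"
      by (simp add: U_def open_Compl)
    have same_label: "eta y = eta (g a)" if "y \<in> U" for y
      using that closure_subset[of "{x'. eta x' \<noteq> eta (g a)}"] by (auto simp: U_def)
    define T where "T = {0..1} \<inter> g -` U"
    have "openin (top_of_set {0..1}) T"
      unfolding T_def using \<open>path g\<close> \<open>open U\<close> unfolding path_def
      by (rule continuous_openin_preimage_gen)
    moreover have "a \<in> T"
      using a off_boundary[OF a] by (simp add: T_def U_def)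
    moreover have "\<forall>x\<in>T. \<forall>y\<in>T. eta (g x) = eta (g 0) \<longrightarrow> eta (g y) = eta (g 0)"
      using same_label by (simp add: T_def)
    ultimately show "\<exists>T. openin (top_of_set {0..1}) T \<and> a \<in> T \<and>
        (\<forall>x\<in>T. \<forall>y\<in>T. eta (g x) = eta (g 0) \<longrightarrow> eta (g y) = eta (g 0))"
      by blast
  qed simp_all
  with assms(2) show False
    by (simp add: pathstart_def pathfinish_def)
qed

lemma compl_V_set_subset_set_expand:
  assumes "length_space TYPE('a::metric_space)"
  shows "- V_set (eta :: 'a \<Rightarrow> 'b) r \<subseteq> set_expand (decision_boundary eta) r"
proof
  fix x
  assume "x \<in> - V_set eta r"
  then obtain y where y: "eta y \<noteq> eta x" "dist x y < r"
    by (auto simp: V_set_def not_le margin_less_iff)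
  then obtain g where g: "path g" "pathstart g = x" "pathfinish g = y" "curve_length g < ereal r"
    using length_space_obtain_short_path[OF assms] by blast
  then obtain t where t: "t \<in> {0..1}" "g t \<in> decision_boundary eta"
    using path_meets_decision_boundary[of g eta] y(1) by auto
  have "ereal (dist x (g t)) < ereal r"
    using le_less_trans[OF dist_le_curve_length[OF t(1)] g(4)] g(2) by (simp add: pathstart_def)
  with t(2) show "x \<in> set_expand (decision_boundary eta) r"
    unfolding set_expand_def by (auto simp: dist_commute)
qed

lemma set_expand_decision_boundary_subset_compl_V_set:
  "set_expand (decision_boundary eta) r \<subseteq> - V_set eta r"
proof
  fix x
  assume "x \<in> set_expand (decision_boundary eta) r"
  then obtain z where z: "z \<in> closure {z'. eta z' \<noteq> eta z}" "dist z x < r"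
    by (auto simp: set_expand_def decision_boundary_def margin_eq_0_iff)
  have "\<exists>x'. eta x' \<noteq> eta x \<and> dist x x' < r"
  proof (cases "eta z = eta x")
    case True
    have "r - dist z x > 0"
      using z(2) by simp
    with z(1) obtain z' where "eta z' \<noteq> eta z" "dist z' z < r - dist z x"
      unfolding closure_approachable by blast
    moreover have "dist x z' \<le> dist z x + dist z' z"
      by (metis dist_commute dist_triangle)
    ultimately show ?thesis using True by auto
  next
    case False
    with z(2) show ?thesis by (auto simp: dist_commute)
  qed
  then show "x \<in> - V_set eta r"
    by (auto simp: V_set_def not_le margin_less_iff)
qed

theorem lemma13:
  fixes eta :: "'a::metric_space \<Rightarrow> 'b" and r :: real
  assumes "length_space TYPE('a)"
    and "r > 0"
  shows "- V_set eta r = set_expand (decision_boundary eta) r"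
  using compl_V_set_subset_set_expand[OF assms(1)] set_expand_decision_boundary_subset_compl_V_set
  by (rule equalityI)

end
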